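(* Let $A,B,C$ be finite-dimensional quantum systems and let $\Lambda^{C\to B}$ be a quantum channel (completely positive trace-preserving linear map). (i) If $\Lambda^{C\to AB}$ is an incoherent extension of $\Lambda^{C\to B}$, then for every measurement assemblage $\{M^A_{a|x}\}_{a,x}$ on $A$ the induced channel assemblage $\{\Lambda^{C\to B}_{a|x}\}_{a,x}$, defined by $\Lambda^{C\to B}_{a|x}[X]=\mathrm{Tr}_A\big(M^A_{a|x}\,\Lambda^{C\to AB}[X]\big)$, is unsteerable. (ii) Conversely, for every unsteerable channel assemblage $\{\Lambda_{a|x}\}_{a,x}$ for $\Lambda^{C\to B}$ there exist a system $A$, an incoherent extension $\Lambda^{C\to AB}$ of $\Lambda^{C\to B}$ and a measurement assemblage $\{M^A_{a|x}\}_{a,x}$ on $A$ such that $\Lambda_{a|x}[X]=\mathrm{Tr}_A\big(M^A_{a|x}\,\Lambda^{C\to AB}[X]\big)$ for all $a,x$ and all operators $X$ on $C$.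
   Context: A channel extension of $\Lambda^{C\to B}$ is a channel $\Lambda^{C\to AB}$ with $\mathrm{Tr}_A\circ\Lambda^{C\to AB}=\Lambda^{C\to B}$. An instrument is a collection $\{\Lambda_\lambda\}_\lambda$ of completely positive maps whose sum is a channel (each $\Lambda_\lambda$ is then a completely positive trace-non-increasing map, a subchannel). A channel extension $\Lambda^{C\to AB}$ of $\Lambda^{C\to B}$ is incoherent if there exist an instrument $\{\Lambda^{C\to B}_\lambda\}_\lambda$ (necessarily summing to $\Lambda^{C\to B}$) and unit-trace density operators $\{\sigma^A_\lambda\}_\lambda$ on $A$ such that $\Lambda^{C\to AB}=\sum_\lambda \Lambda^{C\to B}_\lambda\otimes\sigma^A_\lambda$, i.e. $\Lambda^{C\to AB}[X]=\sum_\lambda \Lambda^{C\to B}_\lambda[X]\otimes\sigma^A_\lambda$. A measurement assemblage on $A$ is a collection $\{M^A_{a|x}\}_{a,x}$ such that for each $x$, $\{M^A_{a|x}\}_a$ is a POVM ($M^A_{a|x}\ge 0$, $\sum_a M^A_{a|x}=\mathbb{1}$). A channel assemblage for $\Lambda^{C\to B}$ is a collection $\{\Lambda_{a|x}\}_{a,x}$ of completely positive maps $C\to B$ such that $\sum_a\Lambda_{a|x}=\Lambda^{C\to B}$ for every $x$. It is unsteerable if there exist an instrument $\{\Lambda_\lambda\}_\lambda$ and conditional probability distributions $p(a|x,\lambda)$ with $\Lambda_{a|x}=\sum_\lambda p(a|x,\lambda)\Lambda_\lambda$ for all $a,x$. *)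

theory Defs
  imports "Jordan_Normal_Form.Matrix"
begin

text \<open>Maps between operator spaces are HOL functions on
  complex matrices; only their behaviour on the relevant carrier matters.
  Composite system AB has dimension dA * dB, with the Kronecker ordering
  (A first).\<close>

definition mtrace :: "complex mat \<Rightarrow> complex" where
  "mtrace M = (\<Sum>i<dim_row M. M $$ (i, i))"

definition psd :: "nat \<Rightarrow> complex mat \<Rightarrow> bool" where
  "psd d M \<longleftrightarrow> M \<in> carrier_mat d d \<and>
     (\<forall>v :: nat \<Rightarrow> complex.
        let q = (\<Sum>i<d. \<Sum>j<d. cnj (v i) * M $$ (i, j) * v j) in Im q = 0 \<and> Re q \<ge> 0)"

definition density :: "nat \<Rightarrow> complex mat \<Rightarrow> bool" where
  "density d M \<longleftrightarrow> psd d M \<and> mtrace M = 1"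

definition tensor_mat :: "complex mat \<Rightarrow> complex mat \<Rightarrow> complex mat" where
  "tensor_mat P Q = mat (dim_row P * dim_row Q) (dim_col P * dim_col Q)
     (\<lambda>(i, j). P $$ (i div dim_row Q, j div dim_col Q) * Q $$ (i mod dim_row Q, j mod dim_col Q))"

definition ptrace_A :: "nat \<Rightarrow> nat \<Rightarrow> complex mat \<Rightarrow> complex mat" where
  "ptrace_A dA dB Y = mat dB dB (\<lambda>(i, j). \<Sum>k<dA. Y $$ (k * dB + i, k * dB + j))"

definition msum :: "nat \<Rightarrow> ('l \<Rightarrow> complex mat) \<Rightarrow> 'l set \<Rightarrow> complex mat" where
  "msum d f L = mat d d (\<lambda>(i, j). \<Sum>l\<in>L. f l $$ (i, j))"

definition lin_map :: "nat \<Rightarrow> nat \<Rightarrow> (complex mat \<Rightarrow> complex mat) \<Rightarrow> bool" where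
  "lin_map dC dB \<Phi> \<longleftrightarrow>
     (\<forall>X \<in> carrier_mat dC dC. \<Phi> X \<in> carrier_mat dB dB) \<and>
     (\<forall>X \<in> carrier_mat dC dC. \<forall>Y \<in> carrier_mat dC dC. \<Phi> (X + Y) = \<Phi> X + \<Phi> Y) \<and>
     (\<forall>c. \<forall>X \<in> carrier_mat dC dC. \<Phi> (c \<cdot>\<^sub>m X) = c \<cdot>\<^sub>m \<Phi> X)"

text \<open>(id_n \<otimes> \<Phi>) applied to an operator on (n-dim ancilla) \<otimes> C, blockwise.\<close>
definition id_tensor :: "nat \<Rightarrow> nat \<Rightarrow> nat \<Rightarrow> (complex mat \<Rightarrow> complex mat) \<Rightarrow> complex mat \<Rightarrow> complex mat" where
  "id_tensor n dC dB \<Phi> M = mat (n * dB) (n * dB)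
     (\<lambda>(i, j). \<Phi> (mat dC dC (\<lambda>(p, q). M $$ ((i div dB) * dC + p, (j div dB) * dC + q)))
               $$ (i mod dB, j mod dB))"

definition cp_map :: "nat \<Rightarrow> nat \<Rightarrow> (complex mat \<Rightarrow> complex mat) \<Rightarrow> bool" where
  "cp_map dC dB \<Phi> \<longleftrightarrow> lin_map dC dB \<Phi> \<and>
     (\<forall>n M. psd (n * dC) M \<longrightarrow> psd (n * dB) (id_tensor n dC dB \<Phi> M))"

definition channel :: "nat \<Rightarrow> nat \<Rightarrow> (complex mat \<Rightarrow> complex mat) \<Rightarrow> bool" where
  "channel dC dB \<Phi> \<longleftrightarrow> cp_map dC dB \<Phi> \<and>
     (\<forall>X \<in> carrier_mat dC dC. mtrace (\<Phi> X) = mtrace X)"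

definition instrument :: "nat \<Rightarrow> nat \<Rightarrow> 'l set \<Rightarrow> ('l \<Rightarrow> complex mat \<Rightarrow> complex mat) \<Rightarrow> bool" where
  "instrument dC dB L \<Phi>s \<longleftrightarrow> finite L \<and> (\<forall>l\<in>L. cp_map dC dB (\<Phi>s l)) \<and>
     channel dC dB (\<lambda>X. msum dB (\<lambda>l. \<Phi>s l X) L)"

definition channel_extension :: "nat \<Rightarrow> nat \<Rightarrow> nat \<Rightarrow> (complex mat \<Rightarrow> complex mat)
    \<Rightarrow> (complex mat \<Rightarrow> complex mat) \<Rightarrow> bool" where
  "channel_extension dA dB dC Ext \<Lambda> \<longleftrightarrow> channel dC (dA * dB) Ext \<and>
     (\<forall>X \<in> carrier_mat dC dC. ptrace_A dA dB (Ext X) = \<Lambda> X)"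

definition incoherent_extension :: "nat \<Rightarrow> nat \<Rightarrow> nat \<Rightarrow> (complex mat \<Rightarrow> complex mat)
    \<Rightarrow> (complex mat \<Rightarrow> complex mat) \<Rightarrow> bool" where
  "incoherent_extension dA dB dC Ext \<Lambda> \<longleftrightarrow> channel_extension dA dB dC Ext \<Lambda> \<and>
     (\<exists>(L :: nat set) \<Phi>s \<sigma>. instrument dC dB L \<Phi>s \<and> (\<forall>l\<in>L. density dA (\<sigma> l)) \<and>
        (\<forall>X \<in> carrier_mat dC dC. Ext X = msum (dA * dB) (\<lambda>l. tensor_mat (\<sigma> l) (\<Phi>s l X)) L))"

definition meas_assemblage :: "nat \<Rightarrow> 'o set \<Rightarrow> 'i set \<Rightarrow> ('o \<Rightarrow> 'i \<Rightarrow> complex mat) \<Rightarrow> bool" where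
  "meas_assemblage dA Out Ins M \<longleftrightarrow> finite Out \<and>
     (\<forall>x\<in>Ins. (\<forall>a\<in>Out. psd dA (M a x)) \<and> msum dA (\<lambda>a. M a x) Out = 1\<^sub>m dA)"

definition channel_assemblage :: "nat \<Rightarrow> nat \<Rightarrow> (complex mat \<Rightarrow> complex mat) \<Rightarrow> 'o set \<Rightarrow> 'i set
    \<Rightarrow> ('o \<Rightarrow> 'i \<Rightarrow> complex mat \<Rightarrow> complex mat) \<Rightarrow> bool" where
  "channel_assemblage dC dB \<Lambda> Out Ins Lam \<longleftrightarrow> finite Out \<and>
     (\<forall>x\<in>Ins. (\<forall>a\<in>Out. cp_map dC dB (Lam a x)) \<and>
        (\<forall>X \<in> carrier_mat dC dC. msum dB (\<lambda>a. Lam a x X) Out = \<Lambda> X))"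

definition unsteerable :: "nat \<Rightarrow> nat \<Rightarrow> 'o set \<Rightarrow> 'i set
    \<Rightarrow> ('o \<Rightarrow> 'i \<Rightarrow> complex mat \<Rightarrow> complex mat) \<Rightarrow> bool" where
  "unsteerable dC dB Out Ins Lam \<longleftrightarrow>
     (\<exists>(L :: nat set) \<Phi>s (p :: 'o \<Rightarrow> 'i \<Rightarrow> nat \<Rightarrow> real). instrument dC dB L \<Phi>s \<and>
        (\<forall>x\<in>Ins. \<forall>l\<in>L. (\<forall>a\<in>Out. p a x l \<ge> 0) \<and> (\<Sum>a\<in>Out. p a x l) = 1) \<and>
        (\<forall>a\<in>Out. \<forall>x\<in>Ins. \<forall>X \<in> carrier_mat dC dC.
            Lam a x X = msum dB (\<lambda>l. complex_of_real (p a x l) \<cdot>\<^sub>m \<Phi>s l X) L))"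

definition induced :: "nat \<Rightarrow> nat \<Rightarrow> (complex mat \<Rightarrow> complex mat) \<Rightarrow> ('o \<Rightarrow> 'i \<Rightarrow> complex mat)
    \<Rightarrow> 'o \<Rightarrow> 'i \<Rightarrow> complex mat \<Rightarrow> complex mat" where
  "induced dA dB Ext M a x X = ptrace_A dA dB (tensor_mat (M a x) (1\<^sub>m dB) * Ext X)"

end

theory Submission
  imports Defs
begin

text \<open>
  (i) If Ext = \<Sum>_l \<sigma>_l \<otimes> \<Lambda>_l, the partial trace turns the induced assemblage into
  \<Lambda>_{a|x} = \<Sum>_l Tr(M_{a|x} \<sigma>_l) \<Lambda>_l.  The weights Tr(M_{a|x} \<sigma>_l) sum to Tr \<sigma>_l = 1 over a
  because M_{.|x} is a POVM, and they are nonnegative because the trace of a product of positive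
  semidefinite matrices is nonnegative.  The latter follows by writing one factor as a sum of
  rank-one terms, obtained by Gaussian elimination: every nonzero pivot splits off a rank-one term
  and leaves a positive semidefinite Schur complement.

  (ii) Conversely, the hidden variable l can be stored in a classical register:
  Ext[X] = \<Sum>_l |l\<rangle>\<langle>l| \<otimes> \<Lambda>_l[X] is an incoherent extension, and measuring the diagonal POVM
  M_{a|x} = \<Sum>_l p(a|x,l) |l\<rangle>\<langle>l| on the register reproduces \<Lambda>_{a|x}.
\<close>

section \<open>Positive semidefinite matrices\<close>

definition quad_form :: "nat \<Rightarrow> complex mat \<Rightarrow> (nat \<Rightarrow> complex) \<Rightarrow> complex" where
  "quad_form d M v = (\<Sum>i<d. \<Sum>j<d. cnj (v i) * M $$ (i, j) * v j)"

lemma psd_iff_quad_form: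
  "psd d M \<longleftrightarrow> M \<in> carrier_mat d d \<and> (\<forall>v. 0 \<le> quad_form d M v)"
  unfolding psd_def quad_form_def Let_def less_eq_complex_def by auto

lemma psdD:
  assumes "psd d M"
  shows "M \<in> carrier_mat d d" "0 \<le> quad_form d M v"
  using assms by (auto simp: psd_iff_quad_form)

lemma quad_form_supported:
  assumes "S \<subseteq> {..<d}" "\<And>t. t \<notin> S \<Longrightarrow> v t = 0"
  shows "quad_form d M v = (\<Sum>i\<in>S. \<Sum>j\<in>S. cnj (v i) * M $$ (i, j) * v j)"
proof -
  have "quad_form d M v = (\<Sum>i<d. \<Sum>j\<in>S. cnj (v i) * M $$ (i, j) * v j)"
    unfolding quad_form_def
    by (intro sum.cong refl sum.mono_neutral_right) (use assms finite_subset in auto)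
  also have "\<dots> = (\<Sum>i\<in>S. \<Sum>j\<in>S. cnj (v i) * M $$ (i, j) * v j)"
    by (intro sum.mono_neutral_right) (use assms finite_subset in auto)
  finally show ?thesis .
qed

lemma quad_form_unit:
  "i < d \<Longrightarrow> quad_form d M (\<lambda>t. if t = i then 1 else 0) = M $$ (i, i)"
  by (subst quad_form_supported[of "{i}"]) auto

lemma quad_form_two_point:
  assumes "i < d" "j < d" "i \<noteq> j"
  shows "quad_form d M (\<lambda>t. if t = i then a else if t = j then b else 0) =
     cnj a * M $$ (i, i) * a + cnj a * M $$ (i, j) * b + cnj b * M $$ (j, i) * a + cnj b * M $$ (j, j) * b"
  by (subst quad_form_supported[of "{i, j}"]) (use assms in auto)

lemma psd_diag_nonneg: "psd d M \<Longrightarrow> i < d \<Longrightarrow> 0 \<le> M $$ (i, i)"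
  by (metis psdD(2) quad_form_unit)

lemma psd_hermitian:
  assumes "psd d M" "i < d" "j < d"
  shows "M $$ (j, i) = cnj (M $$ (i, j))"
proof (cases "i = j")
  case True
  thus ?thesis using psd_diag_nonneg[OF assms(1,2)] by (simp add: less_eq_complex_def complex_eq_iff)
next
  case False
  have "0 \<le> quad_form d M (\<lambda>t. if t = i then 1 else if t = j then 1 else 0)"
    and "0 \<le> quad_form d M (\<lambda>t. if t = i then 1 else if t = j then \<i> else 0)"
    using psdD(2)[OF assms(1)] by blast+
  moreover have "0 \<le> M $$ (i, i)" "0 \<le> M $$ (j, j)"
    using psd_diag_nonneg assms by auto
  ultimately show ?thesis unfolding quad_form_two_point[OF assms(2,3) False]
    by (simp add: less_eq_complex_def complex_eq_iff algebra_simps)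
qed

lemma psd_zero_diag_row:
  assumes "psd d M" "k < d" "j < d" "M $$ (k, k) = 0"
  shows "M $$ (k, j) = 0"
proof (rule ccontr)
  define z where "z = M $$ (k, j)"
  assume "M $$ (k, j) \<noteq> 0"
  hence z: "cmod z > 0" and "k \<noteq> j" using assms(4) z_def by auto
  define s :: real where "s = (Re (M $$ (j, j)) + 1) / (2 * (cmod z)\<^sup>2)"
  let ?v = "\<lambda>t. if t = k then - of_real s * z else if t = j then 1 else 0"
  have "quad_form d M ?v = M $$ (j, j) - of_real (2 * s) * (cnj z * z)"
    unfolding quad_form_two_point[OF assms(2,3) \<open>k \<noteq> j\<close>]
    using assms(4) psd_hermitian[OF assms(1-3)] z_def by (simp add: algebra_simps)
  also have "cnj z * z = of_real ((cmod z)\<^sup>2)"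
    by (metis complex_norm_square mult.commute)
  finally have "Re (quad_form d M ?v) = Re (M $$ (j, j)) - 2 * s * (cmod z)\<^sup>2"
    by simp
  also have "\<dots> = -1"
    unfolding s_def using z by (simp add: field_simps)
  finally have "Re (quad_form d M ?v) = -1" .
  thus False using psdD(2)[OF assms(1), of ?v] by (simp add: less_eq_complex_def)
qed

lemma quad_form_add_unit:
  assumes "k < d"
  shows "quad_form d M (\<lambda>i. v i + (if i = k then t else 0)) = quad_form d M v
     + cnj t * (\<Sum>j<d. M $$ (k, j) * v j) + t * (\<Sum>i<d. cnj (v i) * M $$ (i, k))
     + cnj t * M $$ (k, k) * t"
proof -
  have delta_right: "(\<Sum>j<d. f j * (if j = k then c else 0)) = f k * c"
    and delta_left: "(\<Sum>j<d. (if j = k then c else 0) * f j) = c * f k"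
    for f :: "nat \<Rightarrow> complex" and c
    using assms by (simp_all add: if_distrib[of "\<lambda>x. f _ * x"] if_distrib[of "\<lambda>x. x * f _"] cong: if_cong)
  have "quad_form d M (\<lambda>i. v i + (if i = k then t else 0)) =
     quad_form d M v + (\<Sum>i<d. \<Sum>j<d. (cnj (v i) * M $$ (i, j)) * (if j = k then t else 0))
       + (\<Sum>i<d. (if i = k then cnj t else 0) * (\<Sum>j<d. M $$ (i, j) * v j))
       + (\<Sum>i<d. (if i = k then cnj t else 0) * (\<Sum>j<d. M $$ (i, j) * (if j = k then t else 0)))"
    unfolding quad_form_def sum_distrib_left sum.distrib[symmetric]
    by (intro sum.cong refl) (auto simp: algebra_simps)
  also have "\<dots> = quad_form d M v + (\<Sum>i<d. cnj (v i) * M $$ (i, k) * t)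
      + cnj t * (\<Sum>j<d. M $$ (k, j) * v j) + cnj t * (M $$ (k, k) * t)"
    by (simp only: delta_right delta_left)
  finally show ?thesis by (simp add: algebra_simps sum_distrib_left)
qed

definition schur_complement :: "nat \<Rightarrow> nat \<Rightarrow> complex mat \<Rightarrow> complex mat" where
  "schur_complement d k B = mat d d (\<lambda>(i, j). B $$ (i, j) - B $$ (i, k) * B $$ (k, j) / B $$ (k, k))"

lemma psd_schur_complement:
  assumes B: "psd d B" and k: "k < d" and nz: "B $$ (k, k) \<noteq> 0"
  shows "psd d (schur_complement d k B)"
  unfolding psd_iff_quad_form
proof (intro conjI allI)
  fix v
  let ?\<beta> = "B $$ (k, k)"
  define s where "s = (\<Sum>j<d. B $$ (k, j) * v j)"
  have \<beta>_real: "cnj ?\<beta> = ?\<beta>"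
    using psd_diag_nonneg[OF B k] by (simp add: less_eq_complex_def complex_eq_iff)
  have s_cnj: "(\<Sum>i<d. cnj (v i) * B $$ (i, k)) = cnj s"
    unfolding s_def cnj_sum using psd_hermitian[OF B k] by (intro sum.cong) (auto simp: mult.commute)
  \<comment> \<open>completing the square in the k-th coordinate\<close>
  have "quad_form d (schur_complement d k B) v =
      quad_form d B v - (\<Sum>i<d. cnj (v i) * B $$ (i, k)) * (\<Sum>j<d. B $$ (k, j) * v j) / ?\<beta>"
    unfolding quad_form_def schur_complement_def sum_subtractf[symmetric] sum_divide_distrib
      sum_product
    by (intro sum.cong refl) (auto simp: algebra_simps)
  also have "\<dots> = quad_form d B (\<lambda>i. v i + (if i = k then - s / ?\<beta> else 0))"
    unfolding quad_form_add_unit[OF k] s_def[symmetric] s_cnj using nz \<beta>_real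
    by (simp add: field_simps)
  finally show "0 \<le> quad_form d (schur_complement d k B) v"
    using psdD(2)[OF B] by simp
qed (simp add: schur_complement_def)

lemma schur_complement_rank_one:
  assumes "psd d B" "i < d" "j < d" "k < d"
  shows "B $$ (i, j) = schur_complement d k B $$ (i, j) + B $$ (i, k) * cnj (B $$ (j, k)) / B $$ (k, k)"
  using assms psd_hermitian[OF assms(1) assms(3,4)] by (simp add: schur_complement_def)

lemma psd_rank_one_decomposition_from:
  assumes "psd d B" "k \<le> d" "\<forall>i<d. \<forall>j<d. (i < k \<or> j < k) \<longrightarrow> B $$ (i, j) = 0"
  shows "\<exists>(n::nat) (r :: nat \<Rightarrow> real) w. (\<forall>t. r t \<ge> 0) \<and>
     (\<forall>i<d. \<forall>j<d. B $$ (i, j) = (\<Sum>t<n. of_real (r t) * w t i * cnj (w t j)))"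
  using assms
proof (induction "d - k" arbitrary: k B)
  case 0
  hence "\<forall>i<d. \<forall>j<d. B $$ (i, j) = 0" by auto
  thus ?case by (intro exI[of _ 0]) auto
next
  case (Suc m)
  hence k: "k < d" by auto
  show ?case
  proof (cases "B $$ (k, k) = 0")
    case True
    have row: "B $$ (k, t) = 0" and col: "B $$ (t, k) = 0" if "t < d" for t
      using psd_zero_diag_row[OF Suc.prems(1) k that True] psd_hermitian[OF Suc.prems(1) k that]
      by simp_all
    have "B $$ (i, j) = 0" if "i < d" "j < d" "i < Suc k \<or> j < Suc k" for i j
      using that Suc.prems(3) row col by (auto simp: less_Suc_eq)
    thus ?thesis using Suc k by (intro Suc.hyps(1)[of "Suc k"]) auto
  next
    case False
    let ?\<beta> = "B $$ (k, k)"
    let ?S = "schur_complement d k B"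
    have "\<forall>i<d. \<forall>j<d. (i < Suc k \<or> j < Suc k) \<longrightarrow> ?S $$ (i, j) = 0"
      using Suc.prems(3) k False by (auto simp: schur_complement_def less_Suc_eq)
    moreover have "m = d - Suc k" using Suc.hyps(2) by arith
    ultimately obtain n :: nat and r w where r: "\<forall>t. r t \<ge> 0"
      and S: "\<forall>i<d. \<forall>j<d. ?S $$ (i, j) = (\<Sum>t<n. of_real (r t) * w t i * cnj (w t j))"
      using Suc.hyps(1) psd_schur_complement[OF Suc.prems(1) k False] Suc_leI[OF k] by blast
    obtain b where b: "?\<beta> = of_real b" "b \<ge> 0"
      using psd_diag_nonneg[OF Suc.prems(1) k] by (auto simp: less_eq_complex_def complex_eq_iff)
    define r' where "r' = r(n := 1 / b)"
    define w' where "w' = w(n := (\<lambda>i. B $$ (i, k)))"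
    show ?thesis
    proof (intro exI[of _ "Suc n"] exI[of _ r'] exI[of _ w'] conjI allI impI)
      fix i j assume ij: "i < d" "j < d"
      have "(\<Sum>t<Suc n. of_real (r' t) * w' t i * cnj (w' t j)) =
          ?S $$ (i, j) + B $$ (i, k) * cnj (B $$ (j, k)) / of_real b"
        unfolding r'_def w'_def using S ij by simp
      also have "\<dots> = B $$ (i, j)"
        using schur_complement_rank_one[OF Suc.prems(1) ij k] b(1) by simp
      finally show "B $$ (i, j) = (\<Sum>t<Suc n. of_real (r' t) * w' t i * cnj (w' t j))" ..
    qed (use r b in \<open>auto simp: r'_def\<close>)
  qed
qed

lemma psd_rank_one_decomposition:
  "psd d B \<Longrightarrow> \<exists>(n::nat) (r :: nat \<Rightarrow> real) w. (\<forall>t. r t \<ge> 0) \<and>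
     (\<forall>i<d. \<forall>j<d. B $$ (i, j) = (\<Sum>t<n. of_real (r t) * w t i * cnj (w t j)))"
  using psd_rank_one_decomposition_from[of d B 0] by simp

definition trace_mult :: "nat \<Rightarrow> complex mat \<Rightarrow> complex mat \<Rightarrow> complex" where
  "trace_mult d A B = (\<Sum>k<d. \<Sum>m<d. A $$ (k, m) * B $$ (m, k))"

lemma psd_trace_mult_nonneg:
  assumes A: "psd d A" and B: "psd d B"
  shows "0 \<le> trace_mult d A B"
proof -
  obtain n :: nat and r w where r: "\<forall>t. r t \<ge> 0"
    and B_eq: "\<forall>i<d. \<forall>j<d. B $$ (i, j) = (\<Sum>t<n. of_real (r t) * w t i * cnj (w t j))"
    using psd_rank_one_decomposition[OF B] by blast
  have "trace_mult d A B = (\<Sum>k<d. \<Sum>m<d. \<Sum>t<n. of_real (r t) * (cnj (w t k) * A $$ (k, m) * w t m))"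
    unfolding trace_mult_def using B_eq
    by (intro sum.cong refl) (simp add: sum_distrib_left algebra_simps)
  also have "\<dots> = (\<Sum>t<n. of_real (r t) * quad_form d A (w t))"
    unfolding quad_form_def sum_distrib_left
    by (subst sum.swap, rule sum.cong, simp, subst sum.swap, simp)
  finally show ?thesis
    using psdD(2)[OF A] r by (auto intro!: sum_nonneg mult_nonneg_nonneg simp: less_eq_complex_def)
qed

section \<open>Kronecker products, block sums and the partial trace\<close>

lemma sum_lessThan_mult:
  "(\<Sum>m<a * b. f m) = (\<Sum>k<a. \<Sum>i<b. f (k * b + i :: nat))"
proof (induction a)
  case (Suc a)
  have "(\<Sum>m<Suc a * b. f m) = (\<Sum>m<a * b. f m) + (\<Sum>m\<in>{a * b..<a * b + b}. f m)"
    by (simp add: add.commute lessThan_atLeast0 sum.atLeastLessThan_concat)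
  also have "(\<Sum>m\<in>{a * b..<a * b + b}. f m) = (\<Sum>i<b. f (a * b + i))"
    by (simp add: lessThan_atLeast0 sum.shift_bounds_nat_ivl[of f 0 "a * b" b, simplified] add.commute)
  finally show ?case using Suc by simp
qed simp

lemma block_index_less: "k < a \<Longrightarrow> i < b \<Longrightarrow> k * b + i < a * (b :: nat)"
  by (metis add_less_cancel_left mult_Suc less_eq_Suc_le mult_le_mono1 order_less_le_trans add.commute)

lemma tensor_mat_dims [simp]:
  "dim_row (tensor_mat P Q) = dim_row P * dim_row Q" "dim_col (tensor_mat P Q) = dim_col P * dim_col Q"
  by (simp_all add: tensor_mat_def)

lemma tensor_mat_carrier [simp]:
  "P \<in> carrier_mat a a \<Longrightarrow> Q \<in> carrier_mat b b \<Longrightarrow> tensor_mat P Q \<in> carrier_mat (a * b) (a * b)"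
  by (simp add: tensor_mat_def)

lemma tensor_mat_index:
  assumes "P \<in> carrier_mat a a" "Q \<in> carrier_mat b b" "k < a" "m < a" "i < b" "j < b"
  shows "tensor_mat P Q $$ (k * b + i, m * b + j) = P $$ (k, m) * Q $$ (i, j)"
  using assms block_index_less[of k a i b] block_index_less[of m a j b] by (simp add: tensor_mat_def)

lemma tensor_mat_one: "b > 0 \<Longrightarrow> tensor_mat (1\<^sub>m a) (1\<^sub>m b) = 1\<^sub>m (a * b)"
  by (rule eq_matI)
    (auto simp: tensor_mat_def less_mult_imp_div_less, metis div_mult_mod_eq)

lemma tensor_mat_add_right:
  "b > 0 \<Longrightarrow> A \<in> carrier_mat b b \<Longrightarrow> B \<in> carrier_mat b b \<Longrightarrow>
    tensor_mat P (A + B) = tensor_mat P A + tensor_mat P B"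
  by (rule eq_matI) (auto simp: tensor_mat_def algebra_simps)

lemma tensor_mat_smult_right:
  "b > 0 \<Longrightarrow> A \<in> carrier_mat b b \<Longrightarrow> tensor_mat P (c \<cdot>\<^sub>m A) = c \<cdot>\<^sub>m tensor_mat P A"
  by (rule eq_matI) (auto simp: tensor_mat_def)

lemma mtrace_tensor_mat:
  assumes P: "P \<in> carrier_mat a a" and Q: "Q \<in> carrier_mat b b"
  shows "mtrace (tensor_mat P Q) = mtrace P * mtrace Q"
proof -
  have "mtrace (tensor_mat P Q) = (\<Sum>k<a. \<Sum>i<b. tensor_mat P Q $$ (k * b + i, k * b + i))"
    unfolding mtrace_def using P Q by (simp add: sum_lessThan_mult)
  also have "\<dots> = (\<Sum>k<a. \<Sum>i<b. P $$ (k, k) * Q $$ (i, i))"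
    by (intro sum.cong refl) (simp add: tensor_mat_index[OF P Q])
  finally show ?thesis using P Q by (simp add: mtrace_def sum_product)
qed

lemma msum_index [simp]: "i < d \<Longrightarrow> j < d \<Longrightarrow> msum d f L $$ (i, j) = (\<Sum>l\<in>L. f l $$ (i, j))"
  by (simp add: msum_def)

lemma msum_carrier [simp]:
  "msum d f L \<in> carrier_mat d d" "dim_row (msum d f L) = d" "dim_col (msum d f L) = d"
  by (simp_all add: msum_def)

lemma msum_cong: "(\<And>l. l \<in> L \<Longrightarrow> f l = g l) \<Longrightarrow> msum d f L = msum d g L"
  unfolding msum_def by (intro cong_mat refl sum.cong) auto

lemma msum_singleton: "A \<in> carrier_mat d d \<Longrightarrow> msum d (\<lambda>_. A) {l} = A"
  by (rule eq_matI) auto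

lemma msum_smult_index:
  assumes "\<And>l. l \<in> L \<Longrightarrow> Y l \<in> carrier_mat d d" "i < d" "j < d"
  shows "msum d (\<lambda>l. c l \<cdot>\<^sub>m Y l) L $$ (i, j) = (\<Sum>l\<in>L. c l * Y l $$ (i, j))"
  using assms(2,3) by (auto intro!: sum.cong simp: carrier_matD[OF assms(1)])

lemma msum_smult_one:
  assumes "\<And>l. l \<in> L \<Longrightarrow> Y l \<in> carrier_mat d d"
  shows "msum d (\<lambda>l. 1 \<cdot>\<^sub>m Y l) L = msum d Y L"
  by (rule eq_matI) (auto intro!: sum.cong simp: carrier_matD[OF assms])

lemma msum_msum_smult:
  assumes "\<And>l. l \<in> L \<Longrightarrow> Y l \<in> carrier_mat d d"
  shows "msum d (\<lambda>a. msum d (\<lambda>l. c a l \<cdot>\<^sub>m Y l) L) A = msum d (\<lambda>l. (\<Sum>a\<in>A. c a l) \<cdot>\<^sub>m Y l) L"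
proof (rule eq_matI)
  fix i j assume "i < dim_row (msum d (\<lambda>l. (\<Sum>a\<in>A. c a l) \<cdot>\<^sub>m Y l) L)"
    "j < dim_col (msum d (\<lambda>l. (\<Sum>a\<in>A. c a l) \<cdot>\<^sub>m Y l) L)"
  hence ij: "i < d" "j < d" by simp_all
  show "msum d (\<lambda>a. msum d (\<lambda>l. c a l \<cdot>\<^sub>m Y l) L) A $$ (i, j) =
      msum d (\<lambda>l. (\<Sum>a\<in>A. c a l) \<cdot>\<^sub>m Y l) L $$ (i, j)"
    using ij by (auto simp: carrier_matD[OF assms] sum_distrib_right sum.swap[of _ A]
        intro!: sum.cong)
qed simp_all

lemma mtrace_msum:
  "(\<And>l. l \<in> L \<Longrightarrow> f l \<in> carrier_mat d d) \<Longrightarrow> mtrace (msum d f L) = (\<Sum>l\<in>L. mtrace (f l))"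
  unfolding mtrace_def by (auto simp: sum.swap[of _ L] intro!: sum.cong)

lemma ptrace_A_index [simp]:
  "i < dB \<Longrightarrow> j < dB \<Longrightarrow> ptrace_A dA dB Y $$ (i, j) = (\<Sum>k<dA. Y $$ (k * dB + i, k * dB + j))"
  by (simp add: ptrace_A_def)

lemma ptrace_A_carrier [simp]:
  "ptrace_A dA dB Y \<in> carrier_mat dB dB" "dim_row (ptrace_A dA dB Y) = dB" "dim_col (ptrace_A dA dB Y) = dB"
  by (simp_all add: ptrace_A_def)

lemma trace_mult_msum_left:
  "trace_mult d (msum d f A) B = (\<Sum>a\<in>A. trace_mult d (f a) B)"
  unfolding trace_mult_def by (simp add: sum_distrib_right sum.swap[of _ A])

lemma trace_mult_one_left: "B \<in> carrier_mat d d \<Longrightarrow> trace_mult d (1\<^sub>m d) B = mtrace B"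
  unfolding trace_mult_def mtrace_def by (simp add: if_distrib[of "\<lambda>x. x * _"] cong: if_cong)

lemma ptrace_tensor_msum:
  assumes N: "N \<in> carrier_mat dA dA" and \<sigma>: "\<And>l. l \<in> L \<Longrightarrow> \<sigma> l \<in> carrier_mat dA dA"
    and Y: "\<And>l. l \<in> L \<Longrightarrow> Y l \<in> carrier_mat dB dB"
  shows "ptrace_A dA dB (tensor_mat N (1\<^sub>m dB) * msum (dA * dB) (\<lambda>l. tensor_mat (\<sigma> l) (Y l)) L) =
     msum dB (\<lambda>l. trace_mult dA N (\<sigma> l) \<cdot>\<^sub>m Y l) L"
proof (rule eq_matI)
  fix i j assume "i < dim_row (msum dB (\<lambda>l. trace_mult dA N (\<sigma> l) \<cdot>\<^sub>m Y l) L)"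
    "j < dim_col (msum dB (\<lambda>l. trace_mult dA N (\<sigma> l) \<cdot>\<^sub>m Y l) L)"
  hence i: "i < dB" and j: "j < dB" by simp_all
  let ?T = "tensor_mat N (1\<^sub>m dB)" and ?S = "msum (dA * dB) (\<lambda>l. tensor_mat (\<sigma> l) (Y l)) L"
  have "ptrace_A dA dB (?T * ?S) $$ (i, j) =
      (\<Sum>k<dA. \<Sum>m<dA. \<Sum>i'<dB. ?T $$ (k * dB + i, m * dB + i') * ?S $$ (m * dB + i', k * dB + j))"
    using i j N block_index_less[of _ dA _ dB]
    by (simp add: scalar_prod_def lessThan_atLeast0[symmetric] sum_lessThan_mult)
  also have "\<dots> = (\<Sum>k<dA. \<Sum>m<dA. \<Sum>i'<dB.
      (N $$ (k, m) * (if i = i' then 1 else 0)) * (\<Sum>l\<in>L. \<sigma> l $$ (m, k) * Y l $$ (i', j)))"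
    using i j N \<sigma> Y block_index_less[of _ dA _ dB]
    by (intro sum.cong refl) (simp add: tensor_mat_index[where a = dA])
  also have "\<dots> = (\<Sum>k<dA. \<Sum>m<dA. N $$ (k, m) * (\<Sum>l\<in>L. \<sigma> l $$ (m, k) * Y l $$ (i, j)))"
    using i by (simp add: if_distrib[of "\<lambda>x. _ * x"] if_distrib[of "\<lambda>x. x * _"] cong: if_cong)
  also have "\<dots> = (\<Sum>l\<in>L. trace_mult dA N (\<sigma> l) * Y l $$ (i, j))"
    unfolding trace_mult_def
    by (simp add: sum_distrib_left sum_distrib_right mult_ac sum.swap[of _ L])
  finally show "ptrace_A dA dB (?T * ?S) $$ (i, j) = msum dB (\<lambda>l. trace_mult dA N (\<sigma> l) \<cdot>\<^sub>m Y l) L $$ (i, j)"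
    using msum_smult_index[OF Y i j, where c = "\<lambda>l. trace_mult dA N (\<sigma> l)"] by simp
qed simp_all

section \<open>Completely positive maps\<close>

lemma lin_mapD:
  assumes "lin_map dC dB \<Phi>" "X \<in> carrier_mat dC dC"
  shows "\<Phi> X \<in> carrier_mat dB dB" "dim_row (\<Phi> X) = dB" "dim_col (\<Phi> X) = dB"
    "Y \<in> carrier_mat dC dC \<Longrightarrow> \<Phi> (X + Y) = \<Phi> X + \<Phi> Y"
    "\<Phi> (c \<cdot>\<^sub>m X) = c \<cdot>\<^sub>m \<Phi> X"
  using assms unfolding lin_map_def by auto

lemma cp_map_carrier: "cp_map dC dB \<Phi> \<Longrightarrow> X \<in> carrier_mat dC dC \<Longrightarrow> \<Phi> X \<in> carrier_mat dB dB"
  unfolding cp_map_def using lin_mapD(1) by blast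

lemma channelD:
  assumes "channel dC dB \<Lambda>"
  shows "cp_map dC dB \<Lambda>" "X \<in> carrier_mat dC dC \<Longrightarrow> \<Lambda> X \<in> carrier_mat dB dB"
    "X \<in> carrier_mat dC dC \<Longrightarrow> mtrace (\<Lambda> X) = mtrace X"
  using assms cp_map_carrier unfolding channel_def by blast+

lemma instrumentD:
  assumes "instrument dC dB L \<Phi>s"
  shows "finite L" "l \<in> L \<Longrightarrow> cp_map dC dB (\<Phi>s l)"
    "l \<in> L \<Longrightarrow> X \<in> carrier_mat dC dC \<Longrightarrow> \<Phi>s l X \<in> carrier_mat dB dB"
    "channel dC dB (\<lambda>X. msum dB (\<lambda>l. \<Phi>s l X) L)"
  using assms cp_map_carrier unfolding instrument_def by blast+

lemma cp_map_cong:
  assumes "\<And>X. X \<in> carrier_mat dC dC \<Longrightarrow> F X = G X"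
  shows "cp_map dC dB F = cp_map dC dB G"
proof -
  have "lin_map dC dB F = lin_map dC dB G"
    unfolding lin_map_def using assms by (auto simp: add_carrier_mat smult_carrier_mat)
  moreover have "id_tensor n dC dB F M = id_tensor n dC dB G M" for n M
    unfolding id_tensor_def by (intro cong_mat refl) (auto simp: assms)
  ultimately show ?thesis unfolding cp_map_def by simp
qed

lemma psd_msum_smult:
  assumes "\<And>l. l \<in> L \<Longrightarrow> psd d (P l)" and "\<And>l. l \<in> L \<Longrightarrow> 0 \<le> c l"
  shows "psd d (msum d (\<lambda>l. c l \<cdot>\<^sub>m P l) L)"
  unfolding psd_iff_quad_form
proof (intro conjI allI)
  fix v
  have "quad_form d (msum d (\<lambda>l. c l \<cdot>\<^sub>m P l) L) v =
      (\<Sum>i<d. \<Sum>j<d. \<Sum>l\<in>L. c l * (cnj (v i) * P l $$ (i, j) * v j))"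
    unfolding quad_form_def
    by (intro sum.cong refl)
      (auto simp: carrier_matD[OF psdD(1)[OF assms(1)]] sum_distrib_left sum_distrib_right mult_ac
        intro!: sum.cong)
  also have "\<dots> = (\<Sum>l\<in>L. c l * quad_form d (P l) v)"
    unfolding quad_form_def sum_distrib_left
    by (subst sum.swap, rule sum.cong, simp, subst sum.swap, simp)
  finally show "0 \<le> quad_form d (msum d (\<lambda>l. c l \<cdot>\<^sub>m P l) L) v"
    using assms psdD(2) by (simp add: sum_nonneg)
qed simp

lemma lin_map_msum_smult:
  assumes "\<And>l. l \<in> L \<Longrightarrow> lin_map dC dB (F l)"
  shows "lin_map dC dB (\<lambda>X. msum dB (\<lambda>l. c l \<cdot>\<^sub>m F l X) L)"
  unfolding lin_map_def
proof (intro conjI ballI allI)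
  fix X Y :: "complex mat" assume X: "X \<in> carrier_mat dC dC" and Y: "Y \<in> carrier_mat dC dC"
  show "msum dB (\<lambda>l. c l \<cdot>\<^sub>m F l (X + Y)) L = msum dB (\<lambda>l. c l \<cdot>\<^sub>m F l X) L + msum dB (\<lambda>l. c l \<cdot>\<^sub>m F l Y) L"
    by (rule eq_matI)
      (auto simp: lin_mapD(2,3)[OF assms X] lin_mapD(4)[OF assms X Y] lin_mapD(2,3)[OF assms Y] sum.distrib algebra_simps
        intro!: sum.cong)
next
  fix a and X :: "complex mat" assume X: "X \<in> carrier_mat dC dC"
  show "msum dB (\<lambda>l. c l \<cdot>\<^sub>m F l (a \<cdot>\<^sub>m X)) L = a \<cdot>\<^sub>m msum dB (\<lambda>l. c l \<cdot>\<^sub>m F l X) L"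
    by (rule eq_matI)
      (auto simp: lin_mapD(2,3,5)[OF assms X] sum_distrib_left algebra_simps intro!: sum.cong)
qed simp

lemma id_tensor_msum_smult:
  assumes "\<And>l X. l \<in> L \<Longrightarrow> X \<in> carrier_mat dC dC \<Longrightarrow> F l X \<in> carrier_mat dB dB"
  shows "id_tensor n dC dB (\<lambda>X. msum dB (\<lambda>l. c l \<cdot>\<^sub>m F l X) L) M =
    msum (n * dB) (\<lambda>l. c l \<cdot>\<^sub>m id_tensor n dC dB (F l) M) L"
proof (rule eq_matI)
  fix i j assume "i < dim_row (msum (n * dB) (\<lambda>l. c l \<cdot>\<^sub>m id_tensor n dC dB (F l) M) L)"
    "j < dim_col (msum (n * dB) (\<lambda>l. c l \<cdot>\<^sub>m id_tensor n dC dB (F l) M) L)"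
  hence ij: "i < n * dB" "j < n * dB" by simp_all
  hence "dB > 0" by (cases dB) auto
  thus "id_tensor n dC dB (\<lambda>X. msum dB (\<lambda>l. c l \<cdot>\<^sub>m F l X) L) M $$ (i, j) =
      msum (n * dB) (\<lambda>l. c l \<cdot>\<^sub>m id_tensor n dC dB (F l) M) L $$ (i, j)"
    using ij by (auto simp: id_tensor_def carrier_matD[OF assms] intro!: sum.cong)
qed (simp_all add: id_tensor_def)

lemma cp_map_msum_smult:
  assumes "\<And>l. l \<in> L \<Longrightarrow> cp_map dC dB (F l)" and "\<And>l. l \<in> L \<Longrightarrow> 0 \<le> c l"
  shows "cp_map dC dB (\<lambda>X. msum dB (\<lambda>l. c l \<cdot>\<^sub>m F l X) L)"
  unfolding cp_map_def
proof (intro conjI allI impI)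
  show "lin_map dC dB (\<lambda>X. msum dB (\<lambda>l. c l \<cdot>\<^sub>m F l X) L)"
    using assms(1) by (intro lin_map_msum_smult) (simp add: cp_map_def)
  fix n M assume "psd (n * dC) M"
  moreover have "id_tensor n dC dB (\<lambda>X. msum dB (\<lambda>l. c l \<cdot>\<^sub>m F l X) L) M =
      msum (n * dB) (\<lambda>l. c l \<cdot>\<^sub>m id_tensor n dC dB (F l) M) L"
    using cp_map_carrier[OF assms(1)] by (rule id_tensor_msum_smult)
  ultimately show "psd (n * dB) (id_tensor n dC dB (\<lambda>X. msum dB (\<lambda>l. c l \<cdot>\<^sub>m F l X) L) M)"
    using assms by (auto intro!: psd_msum_smult simp: cp_map_def)
qed

section \<open>Incoherent extensions induce unsteerable assemblages\<close>

lemma ptrace_msum_tensor: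
  assumes "dB > 0" "\<And>l. l \<in> L \<Longrightarrow> \<sigma> l \<in> carrier_mat dA dA" "\<And>l. l \<in> L \<Longrightarrow> Y l \<in> carrier_mat dB dB"
  shows "ptrace_A dA dB (msum (dA * dB) (\<lambda>l. tensor_mat (\<sigma> l) (Y l)) L) =
    msum dB (\<lambda>l. mtrace (\<sigma> l) \<cdot>\<^sub>m Y l) L"
proof -
  have "ptrace_A dA dB (msum (dA * dB) (\<lambda>l. tensor_mat (\<sigma> l) (Y l)) L) =
      ptrace_A dA dB (tensor_mat (1\<^sub>m dA) (1\<^sub>m dB) * msum (dA * dB) (\<lambda>l. tensor_mat (\<sigma> l) (Y l)) L)"
    by (simp add: tensor_mat_one[OF assms(1)])
  also have "\<dots> = msum dB (\<lambda>l. trace_mult dA (1\<^sub>m dA) (\<sigma> l) \<cdot>\<^sub>m Y l) L"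
    using assms(2,3) by (intro ptrace_tensor_msum) auto
  also have "\<dots> = msum dB (\<lambda>l. mtrace (\<sigma> l) \<cdot>\<^sub>m Y l) L"
    using assms(2) by (intro msum_cong) (simp add: trace_mult_one_left)
  finally show ?thesis .
qed

lemma trace_mult_povm_sum:
  "msum d M A = 1\<^sub>m d \<Longrightarrow> B \<in> carrier_mat d d \<Longrightarrow> (\<Sum>a\<in>A. trace_mult d (M a) B) = mtrace B"
  by (metis trace_mult_msum_left trace_mult_one_left)

lemma incoherent_extensionE:
  assumes "dB > 0" and "incoherent_extension dA dB dC Ext \<Lambda>"
  obtains L :: "nat set" and \<Phi>s \<sigma> where "instrument dC dB L \<Phi>s" "\<And>l. l \<in> L \<Longrightarrow> density dA (\<sigma> l)"
    "\<And>X. X \<in> carrier_mat dC dC \<Longrightarrow> Ext X = msum (dA * dB) (\<lambda>l. tensor_mat (\<sigma> l) (\<Phi>s l X)) L"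
    "\<And>X. X \<in> carrier_mat dC dC \<Longrightarrow> \<Lambda> X = msum dB (\<lambda>l. \<Phi>s l X) L"
proof -
  obtain L :: "nat set" and \<Phi>s \<sigma> where inst: "instrument dC dB L \<Phi>s"
    and dens: "\<And>l. l \<in> L \<Longrightarrow> density dA (\<sigma> l)"
    and Ext: "\<And>X. X \<in> carrier_mat dC dC \<Longrightarrow> Ext X = msum (dA * dB) (\<lambda>l. tensor_mat (\<sigma> l) (\<Phi>s l X)) L"
    using assms(2) unfolding incoherent_extension_def by blast
  have "\<Lambda> X = msum dB (\<lambda>l. \<Phi>s l X) L" if X: "X \<in> carrier_mat dC dC" for X
  proof -
    have \<Phi>X: "\<Phi>s l X \<in> carrier_mat dB dB" if "l \<in> L" for l
      using instrumentD(3)[OF inst that X] .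
    have \<sigma>: "\<sigma> l \<in> carrier_mat dA dA" "mtrace (\<sigma> l) = 1" if "l \<in> L" for l
      using dens[OF that] psdD(1) by (auto simp: density_def)
    have "\<Lambda> X = ptrace_A dA dB (Ext X)"
      using assms(2) X by (simp add: incoherent_extension_def channel_extension_def)
    also have "\<dots> = msum dB (\<lambda>l. mtrace (\<sigma> l) \<cdot>\<^sub>m \<Phi>s l X) L"
      unfolding Ext[OF X] using assms(1) \<sigma>(1) \<Phi>X by (rule ptrace_msum_tensor)
    also have "\<dots> = msum dB (\<lambda>l. \<Phi>s l X) L"
      using \<sigma>(2) \<Phi>X by (simp add: msum_smult_one cong: msum_cong)
    finally show ?thesis .
  qed
  with inst dens Ext that show ?thesis by blast
qed

lemma induced_assemblage_unsteerable:
  assumes dB: "dB > 0" and inc: "incoherent_extension dA dB dC Ext \<Lambda>"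
    and meas: "meas_assemblage dA Out Ins M"
  shows "channel_assemblage dC dB \<Lambda> Out Ins (induced dA dB Ext M)"
    and "unsteerable dC dB Out Ins (induced dA dB Ext M)"
proof -
  obtain L :: "nat set" and \<Phi>s \<sigma> where inst: "instrument dC dB L \<Phi>s"
    and dens: "\<And>l. l \<in> L \<Longrightarrow> density dA (\<sigma> l)"
    and Ext: "\<And>X. X \<in> carrier_mat dC dC \<Longrightarrow> Ext X = msum (dA * dB) (\<lambda>l. tensor_mat (\<sigma> l) (\<Phi>s l X)) L"
    and \<Lambda>: "\<And>X. X \<in> carrier_mat dC dC \<Longrightarrow> \<Lambda> X = msum dB (\<lambda>l. \<Phi>s l X) L"
    using incoherent_extensionE[OF dB inc] by metis
  have \<Phi>: "cp_map dC dB (\<Phi>s l)" if "l \<in> L" for l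
    using instrumentD(2)[OF inst that] .
  have \<sigma>: "psd dA (\<sigma> l)" "\<sigma> l \<in> carrier_mat dA dA" "mtrace (\<sigma> l) = 1" if "l \<in> L" for l
    using dens[OF that] psdD(1) by (auto simp: density_def)
  have M: "psd dA (M a x)" "M a x \<in> carrier_mat dA dA" if "x \<in> Ins" "a \<in> Out" for a x
    using meas that psdD(1) by (auto simp: meas_assemblage_def)
  define c where "c a x l = trace_mult dA (M a x) (\<sigma> l)" for a x l
  have c_nonneg: "0 \<le> c a x l" if "x \<in> Ins" "a \<in> Out" "l \<in> L" for a x l
    unfolding c_def using that by (intro psd_trace_mult_nonneg M \<sigma>)
  have c_sum: "(\<Sum>a\<in>Out. c a x l) = 1" if "x \<in> Ins" "l \<in> L" for x l
    unfolding c_def using meas that \<sigma>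
    by (auto simp: meas_assemblage_def trace_mult_povm_sum[where M = "\<lambda>a. M a x"])
  have induced: "induced dA dB Ext M a x X = msum dB (\<lambda>l. c a x l \<cdot>\<^sub>m \<Phi>s l X) L"
    if "x \<in> Ins" "a \<in> Out" "X \<in> carrier_mat dC dC" for a x X
    unfolding induced_def c_def Ext[OF that(3)]
    using M(2)[OF that(1,2)] \<sigma>(2) instrumentD(3)[OF inst _ that(3)] by (rule ptrace_tensor_msum)
  have \<Phi>X: "\<Phi>s l X \<in> carrier_mat dB dB" if "l \<in> L" "X \<in> carrier_mat dC dC" for l X
    using instrumentD(3)[OF inst that] .
  show "channel_assemblage dC dB \<Lambda> Out Ins (induced dA dB Ext M)"
    unfolding channel_assemblage_def
  proof (intro conjI ballI)
    show "finite Out" using meas by (simp add: meas_assemblage_def)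
  next
    fix x a assume x: "x \<in> Ins" and a: "a \<in> Out"
    have "cp_map dC dB (induced dA dB Ext M a x) = cp_map dC dB (\<lambda>X. msum dB (\<lambda>l. c a x l \<cdot>\<^sub>m \<Phi>s l X) L)"
      using induced[OF x a] by (rule cp_map_cong)
    thus "cp_map dC dB (induced dA dB Ext M a x)"
      using cp_map_msum_smult[OF \<Phi> c_nonneg[OF x a]] by simp
  next
    fix x assume x: "x \<in> Ins"
    fix X :: "complex mat" assume X: "X \<in> carrier_mat dC dC"
    have "msum dB (\<lambda>a. induced dA dB Ext M a x X) Out = msum dB (\<lambda>a. msum dB (\<lambda>l. c a x l \<cdot>\<^sub>m \<Phi>s l X) L) Out"
      using induced[OF x _ X] by (rule msum_cong)
    also have "\<dots> = msum dB (\<lambda>l. \<Phi>s l X) L"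
      using \<Phi>X[OF _ X] c_sum[OF x] by (simp add: msum_msum_smult msum_smult_one cong: msum_cong)
    finally show "msum dB (\<lambda>a. induced dA dB Ext M a x X) Out = \<Lambda> X"
      using \<Lambda>[OF X] by simp
  qed
  show "unsteerable dC dB Out Ins (induced dA dB Ext M)"
    unfolding unsteerable_def
  proof (intro exI[of _ L] exI[of _ \<Phi>s] exI[of _ "\<lambda>a x l. Re (c a x l)"] conjI)
    show "\<forall>x\<in>Ins. \<forall>l\<in>L. (\<forall>a\<in>Out. 0 \<le> Re (c a x l)) \<and> (\<Sum>a\<in>Out. Re (c a x l)) = 1"
      using c_nonneg c_sum by (auto simp: less_eq_complex_def simp flip: Re_sum)
    show "\<forall>a\<in>Out. \<forall>x\<in>Ins. \<forall>X\<in>carrier_mat dC dC.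
        induced dA dB Ext M a x X = msum dB (\<lambda>l. complex_of_real (Re (c a x l)) \<cdot>\<^sub>m \<Phi>s l X) L"
      using c_nonneg induced by (simp add: nonnegative_complex_is_real cong: msum_cong)
  qed (rule inst)
qed

section \<open>Unsteerable assemblages from a classical register\<close>

definition diag_mat :: "nat \<Rightarrow> (nat \<Rightarrow> real) \<Rightarrow> complex mat" where
  "diag_mat d q = mat d d (\<lambda>(i, j). if i = j then complex_of_real (q i) else 0)"

definition basis_proj :: "nat \<Rightarrow> nat \<Rightarrow> complex mat" where
  "basis_proj d l = diag_mat d (\<lambda>i. if i = l then 1 else 0)"

lemma diag_mat_carrier [simp]:
  "diag_mat d q \<in> carrier_mat d d" "dim_row (diag_mat d q) = d" "dim_col (diag_mat d q) = d"
  by (simp_all add: diag_mat_def)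

lemma basis_proj_carrier [simp]:
  "basis_proj d l \<in> carrier_mat d d" "dim_row (basis_proj d l) = d" "dim_col (basis_proj d l) = d"
  by (simp_all add: basis_proj_def)

lemma diag_mat_index [simp]:
  "i < d \<Longrightarrow> j < d \<Longrightarrow> diag_mat d q $$ (i, j) = (if i = j then complex_of_real (q i) else 0)"
  by (simp add: diag_mat_def)

lemma basis_proj_index [simp]:
  "i < d \<Longrightarrow> j < d \<Longrightarrow> basis_proj d l $$ (i, j) = (if i = l then if j = l then 1 else 0 else 0)"
  by (simp add: basis_proj_def)

lemma psd_diag_mat:
  assumes "\<And>i. i < d \<Longrightarrow> q i \<ge> 0"
  shows "psd d (diag_mat d q)"
  unfolding psd_iff_quad_form
proof (intro conjI allI)
  fix v
  have "quad_form d (diag_mat d q) v = (\<Sum>i<d. cnj (v i) * complex_of_real (q i) * v i)"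
    unfolding quad_form_def
    by (intro sum.cong refl) (simp add: if_distrib[of "\<lambda>x. _ * x"] if_distrib[of "\<lambda>x. x * _"] cong: if_cong)
  also have "\<dots> = (\<Sum>i<d. complex_of_real (q i * (cmod (v i))\<^sup>2))"
    by (simp only: of_real_mult complex_norm_square mult_ac)
  finally show "0 \<le> quad_form d (diag_mat d q) v"
    using assms by (auto intro!: sum_nonneg simp: less_eq_complex_def)
qed simp

lemma density_basis_proj: "l < d \<Longrightarrow> density d (basis_proj d l)"
  unfolding density_def basis_proj_def mtrace_def
  by (auto intro: psd_diag_mat simp: if_distrib[of complex_of_real] cong: if_cong)

lemma trace_mult_basis_proj: "l < d \<Longrightarrow> trace_mult d A (basis_proj d l) = A $$ (l, l)"
  unfolding trace_mult_def by (simp add: if_distrib[of "\<lambda>x. _ * x"] cong: if_cong)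

lemma meas_assemblage_diag_mat:
  assumes "finite Out"
    and "\<And>x k a. x \<in> Ins \<Longrightarrow> a \<in> Out \<Longrightarrow> k < d \<Longrightarrow> q a x k \<ge> 0"
    and "\<And>x k. x \<in> Ins \<Longrightarrow> k < d \<Longrightarrow> (\<Sum>a\<in>Out. q a x k) = 1"
  shows "meas_assemblage d Out Ins (\<lambda>a x. diag_mat d (q a x))"
  unfolding meas_assemblage_def
proof (intro conjI ballI)
  fix x assume x: "x \<in> Ins"
  show "psd d (diag_mat d (q a x))" if "a \<in> Out" for a
    using assms(2)[OF x that] by (rule psd_diag_mat)
  show "msum d (\<lambda>a. diag_mat d (q a x)) Out = 1\<^sub>m d"
    by (rule eq_matI) (auto simp flip: of_real_sum simp: assms(3)[OF x])
qed (rule assms(1))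

lemma id_tensor_tensor_mat_index:
  assumes P: "P \<in> carrier_mat dA dA" and \<Phi>: "\<And>X. X \<in> carrier_mat dC dC \<Longrightarrow> \<Phi> X \<in> carrier_mat dB dB"
    and q: "q < n" "q' < n" and a: "a < dA" "a' < dA" and b: "b < dB" "b' < dB"
  shows "id_tensor n dC (dA * dB) (\<lambda>X. tensor_mat P (\<Phi> X)) M
      $$ (q * (dA * dB) + (a * dB + b), q' * (dA * dB) + (a' * dB + b'))
    = P $$ (a, a') * id_tensor n dC dB \<Phi> M $$ (q * dB + b, q' * dB + b')"
proof -
  have ab: "a * dB + b < dA * dB" "a' * dB + b' < dA * dB"
    using a b by (simp_all add: block_index_less)
  have "dB > 0" using b by simp
  thus ?thesis
    using q a b ab block_index_less[OF q(1) ab(1)] block_index_less[OF q(2) ab(2)]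
      block_index_less[OF q(1) b(1)] block_index_less[OF q(2) b(2)]
    by (simp add: id_tensor_def tensor_mat_index[OF P \<Phi> a b])
qed

lemma quad_form_id_tensor_basis_proj:
  assumes l: "l < dA" and \<Phi>: "\<And>X. X \<in> carrier_mat dC dC \<Longrightarrow> \<Phi> X \<in> carrier_mat dB dB"
  shows "quad_form (n * (dA * dB)) (id_tensor n dC (dA * dB) (\<lambda>X. tensor_mat (basis_proj dA l) (\<Phi> X)) M) v =
    quad_form (n * dB) (id_tensor n dC dB \<Phi> M) (\<lambda>t. v (t div dB * (dA * dB) + (l * dB + t mod dB)))"
proof -
  let ?D = "dA * dB"
  let ?T = "id_tensor n dC dB \<Phi> M"
  let ?w = "\<lambda>q a b. v (q * ?D + (a * dB + b))"
  have sum_if: "(\<Sum>x\<in>A. if P then f x else 0) = (if P then sum f A else 0)" for P A and f :: "nat \<Rightarrow> complex"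
    by simp
  have "quad_form (n * ?D) (id_tensor n dC ?D (\<lambda>X. tensor_mat (basis_proj dA l) (\<Phi> X)) M) v =
     (\<Sum>q<n. \<Sum>a<dA. \<Sum>b<dB. \<Sum>q'<n. \<Sum>a'<dA. \<Sum>b'<dB.
        if a = l then if a' = l then cnj (?w q l b) * ?T $$ (q * dB + b, q' * dB + b') * ?w q' l b' else 0 else 0)"
    unfolding quad_form_def sum_lessThan_mult
    by (intro sum.cong refl)
      (simp add: id_tensor_tensor_mat_index[OF basis_proj_carrier(1) \<Phi>])
  also have "\<dots> = (\<Sum>q<n. \<Sum>b<dB. \<Sum>q'<n. \<Sum>b'<dB. cnj (?w q l b) * ?T $$ (q * dB + b, q' * dB + b') * ?w q' l b')"
    using l by (simp add: sum_if)
  also have "\<dots> = quad_form (n * dB) ?T (\<lambda>t. v (t div dB * ?D + (l * dB + t mod dB)))"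
    unfolding quad_form_def sum_lessThan_mult by (intro sum.cong refl) simp
  finally show ?thesis .
qed

lemma cp_map_tensor_basis_proj:
  assumes cp: "cp_map dC dB \<Phi>" and l: "l < dA" and dB: "dB > 0"
  shows "cp_map dC (dA * dB) (\<lambda>X. tensor_mat (basis_proj dA l) (\<Phi> X))"
  unfolding cp_map_def
proof (intro conjI allI impI)
  have lin: "lin_map dC dB \<Phi>" using cp by (simp add: cp_map_def)
  show "lin_map dC (dA * dB) (\<lambda>X. tensor_mat (basis_proj dA l) (\<Phi> X))"
    unfolding lin_map_def
    using lin_mapD[OF lin] tensor_mat_add_right[OF dB] tensor_mat_smult_right[OF dB] by auto
  fix n M assume "psd (n * dC) M"
  hence "psd (n * dB) (id_tensor n dC dB \<Phi> M)" using cp by (simp add: cp_map_def)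
  thus "psd (n * (dA * dB)) (id_tensor n dC (dA * dB) (\<lambda>X. tensor_mat (basis_proj dA l) (\<Phi> X)) M)"
    using quad_form_id_tensor_basis_proj[where dC = dC and \<Phi> = \<Phi>, OF l cp_map_carrier[OF cp]]
    by (simp add: psd_iff_quad_form id_tensor_def)
qed

definition flag_extension ::
    "nat \<Rightarrow> nat \<Rightarrow> nat set \<Rightarrow> (nat \<Rightarrow> complex mat \<Rightarrow> complex mat) \<Rightarrow> complex mat \<Rightarrow> complex mat" where
  "flag_extension dA dB L \<Phi>s X = msum (dA * dB) (\<lambda>l. tensor_mat (basis_proj dA l) (\<Phi>s l X)) L"

lemma induced_flag_extension:
  assumes "\<And>l. l \<in> L \<Longrightarrow> l < dA" and "\<And>l. l \<in> L \<Longrightarrow> \<Phi>s l X \<in> carrier_mat dB dB"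
  shows "induced dA dB (flag_extension dA dB L \<Phi>s) (\<lambda>a x. diag_mat dA (q a x)) a x X =
    msum dB (\<lambda>l. complex_of_real (q a x l) \<cdot>\<^sub>m \<Phi>s l X) L"
proof -
  have "induced dA dB (flag_extension dA dB L \<Phi>s) (\<lambda>a x. diag_mat dA (q a x)) a x X =
      msum dB (\<lambda>l. trace_mult dA (diag_mat dA (q a x)) (basis_proj dA l) \<cdot>\<^sub>m \<Phi>s l X) L"
    unfolding induced_def flag_extension_def using assms(2) by (intro ptrace_tensor_msum) auto
  also have "\<dots> = msum dB (\<lambda>l. complex_of_real (q a x l) \<cdot>\<^sub>m \<Phi>s l X) L"
    using assms(1) by (intro msum_cong) (simp add: trace_mult_basis_proj)
  finally show ?thesis .
qed

lemma flag_extension_incoherent: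
  assumes dB: "dB > 0" and inst: "instrument dC dB L \<Phi>s" and L: "\<And>l. l \<in> L \<Longrightarrow> l < dA"
    and \<Lambda>: "\<And>X. X \<in> carrier_mat dC dC \<Longrightarrow> \<Lambda> X = msum dB (\<lambda>l. \<Phi>s l X) L"
  shows "incoherent_extension dA dB dC (flag_extension dA dB L \<Phi>s) \<Lambda>"
proof -
  have \<Phi>: "cp_map dC dB (\<Phi>s l)" if "l \<in> L" for l
    using instrumentD(2)[OF inst that] .
  have \<Phi>X: "\<Phi>s l X \<in> carrier_mat dB dB" if "l \<in> L" "X \<in> carrier_mat dC dC" for l X
    using instrumentD(3)[OF inst that] .
  have flag: "density dA (basis_proj dA l)" "mtrace (basis_proj dA l) = 1" if "l \<in> L" for l
    using density_basis_proj[OF L[OF that]] by (simp_all add: density_def)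
  have "cp_map dC (dA * dB) (\<lambda>X. msum (dA * dB) (\<lambda>l. 1 \<cdot>\<^sub>m tensor_mat (basis_proj dA l) (\<Phi>s l X)) L)"
  proof (rule cp_map_msum_smult)
    fix l assume "l \<in> L"
    thus "cp_map dC (dA * dB) (\<lambda>X. tensor_mat (basis_proj dA l) (\<Phi>s l X))"
      using cp_map_tensor_basis_proj \<Phi> L dB by blast
  qed (simp add: less_eq_complex_def)
  hence cp: "cp_map dC (dA * dB) (flag_extension dA dB L \<Phi>s)"
    using \<Phi>X by (simp add: flag_extension_def msum_smult_one cong: cp_map_cong)
  have tr: "mtrace (flag_extension dA dB L \<Phi>s X) = mtrace X" if X: "X \<in> carrier_mat dC dC" for X
  proof -
    have "mtrace (flag_extension dA dB L \<Phi>s X) = (\<Sum>l\<in>L. mtrace (\<Phi>s l X))"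
      unfolding flag_extension_def using \<Phi>X[OF _ X] flag(2)
      by (simp add: mtrace_msum mtrace_tensor_mat[where a = dA and b = dB])
    also have "\<dots> = mtrace (msum dB (\<lambda>l. \<Phi>s l X) L)"
      using \<Phi>X[OF _ X] by (simp add: mtrace_msum)
    also have "\<dots> = mtrace X"
      using channelD(3)[OF instrumentD(4)[OF inst] X] .
    finally show ?thesis .
  qed
  have ptrace: "ptrace_A dA dB (flag_extension dA dB L \<Phi>s X) = \<Lambda> X" if X: "X \<in> carrier_mat dC dC" for X
    unfolding flag_extension_def \<Lambda>[OF X]
    using ptrace_msum_tensor[where \<sigma> = "basis_proj dA", OF dB _ \<Phi>X[OF _ X]] flag(2) \<Phi>X[OF _ X]
    by (simp add: msum_smult_one cong: msum_cong)
  show ?thesis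
    unfolding incoherent_extension_def channel_extension_def channel_def
    using cp tr ptrace inst flag(1)
    by (intro conjI ballI exI[of _ L] exI[of _ \<Phi>s] exI[of _ "basis_proj dA"])
      (simp_all add: flag_extension_def)
qed

lemma instrument_singleton:
  assumes "channel dC dB \<Lambda>"
  shows "instrument dC dB {0::nat} (\<lambda>_. \<Lambda>)"
proof -
  have single: "msum dB (\<lambda>_. \<Lambda> X) {0::nat} = \<Lambda> X" if "X \<in> carrier_mat dC dC" for X
    using channelD(2)[OF assms that] by (rule msum_singleton)
  hence "cp_map dC dB (\<lambda>X. msum dB (\<lambda>_. \<Lambda> X) {0::nat}) = cp_map dC dB \<Lambda>"
    by (rule cp_map_cong)
  thus ?thesis
    unfolding instrument_def channel_def using channelD[OF assms] single by auto
qed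

lemma channel_assemblage_outcomes_nonempty:
  assumes "dC > 0" and "channel dC dB \<Lambda>" and "channel_assemblage dC dB \<Lambda> Out Ins Lam" and "x \<in> Ins"
  shows "Out \<noteq> {}"
proof
  assume "Out = {}"
  have "of_nat dC = mtrace (1\<^sub>m dC)"
    by (simp add: mtrace_def)
  also have "\<dots> = mtrace (\<Lambda> (1\<^sub>m dC))"
    using channelD(3)[OF assms(2)] by simp
  also have "\<Lambda> (1\<^sub>m dC) = msum dB (\<lambda>a. Lam a x (1\<^sub>m dC)) Out"
    using assms(3,4) by (simp add: channel_assemblage_def)
  also have "mtrace \<dots> = 0"
    using \<open>Out = {}\<close> by (simp add: mtrace_def)
  finally show False using assms(1) by simp
qed

lemma unsteerable_normal_form:
  fixes Lam :: "'o \<Rightarrow> 'i \<Rightarrow> complex mat \<Rightarrow> complex mat"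
  assumes dC: "dC > 0" and \<Lambda>: "channel dC dB \<Lambda>"
    and assemblage: "channel_assemblage dC dB \<Lambda> Out Ins Lam" and unst: "unsteerable dC dB Out Ins Lam"
  obtains L :: "nat set" and \<Phi>s and p :: "'o \<Rightarrow> 'i \<Rightarrow> nat \<Rightarrow> real"
  where "instrument dC dB L \<Phi>s" "\<And>X. X \<in> carrier_mat dC dC \<Longrightarrow> \<Lambda> X = msum dB (\<lambda>l. \<Phi>s l X) L"
    "\<And>a x k. x \<in> Ins \<Longrightarrow> a \<in> Out \<Longrightarrow> p a x k \<ge> 0"
    "\<And>x k. x \<in> Ins \<Longrightarrow> (\<Sum>a\<in>Out. p a x k) = 1"
    "\<And>a x X. a \<in> Out \<Longrightarrow> x \<in> Ins \<Longrightarrow> X \<in> carrier_mat dC dC \<Longrightarrow>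
       Lam a x X = msum dB (\<lambda>l. complex_of_real (p a x l) \<cdot>\<^sub>m \<Phi>s l X) L"
proof (cases "Ins = {}")
  case True
  \<comment> \<open>without settings the given instrument need not sum to \<open>\<Lambda>\<close>; use \<open>\<Lambda>\<close> itself\<close>
  have "\<Lambda> X = msum dB (\<lambda>_. \<Lambda> X) {0::nat}" if "X \<in> carrier_mat dC dC" for X
    using channelD(2)[OF \<Lambda> that] by (rule msum_singleton[symmetric])
  thus ?thesis
    using True by (intro that[OF instrument_singleton[OF \<Lambda>], of "\<lambda>_ _ _. 0"]) auto
next
  case False
  then obtain x0 where x0: "x0 \<in> Ins" by blast
  obtain L :: "nat set" and \<Phi>s and p :: "'o \<Rightarrow> 'i \<Rightarrow> nat \<Rightarrow> real" where inst: "instrument dC dB L \<Phi>s"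
    and p: "\<forall>x\<in>Ins. \<forall>l\<in>L. (\<forall>a\<in>Out. p a x l \<ge> 0) \<and> (\<Sum>a\<in>Out. p a x l) = 1"
    and Lam: "\<forall>a\<in>Out. \<forall>x\<in>Ins. \<forall>X \<in> carrier_mat dC dC.
      Lam a x X = msum dB (\<lambda>l. complex_of_real (p a x l) \<cdot>\<^sub>m \<Phi>s l X) L"
    using unst unfolding unsteerable_def by blast
  have \<Phi>X: "\<Phi>s l X \<in> carrier_mat dB dB" if "l \<in> L" "X \<in> carrier_mat dC dC" for l X
    using instrumentD(3)[OF inst that] .
  have \<Lambda>_sum: "\<Lambda> X = msum dB (\<lambda>l. \<Phi>s l X) L" if X: "X \<in> carrier_mat dC dC" for X
  proof -
    have "\<Lambda> X = msum dB (\<lambda>a. Lam a x0 X) Out"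
      using assemblage x0 X by (simp add: channel_assemblage_def)
    also have "\<dots> = msum dB (\<lambda>a. msum dB (\<lambda>l. complex_of_real (p a x0 l) \<cdot>\<^sub>m \<Phi>s l X) L) Out"
      using Lam x0 X by (intro msum_cong) simp
    also have "\<dots> = msum dB (\<lambda>l. \<Phi>s l X) L"
      using p x0 \<Phi>X[OF _ X]
      by (simp add: msum_msum_smult msum_smult_one flip: of_real_sum cong: msum_cong)
    finally show ?thesis .
  qed
  have "card Out > 0"
    using channel_assemblage_outcomes_nonempty[OF dC \<Lambda> assemblage x0] assemblage
    by (simp add: channel_assemblage_def card_gt_0_iff)
  \<comment> \<open>labels outside \<open>L\<close> carry no instrument element; uniform weights keep them normalised\<close>
  define p' where "p' a x l = (if l \<in> L then p a x l else 1 / real (card Out))" for a x l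
  show ?thesis
  proof (rule that[OF inst \<Lambda>_sum, of p'])
    show "p' a x k \<ge> 0" if "x \<in> Ins" "a \<in> Out" for a x k
      using p that by (simp add: p'_def)
    show "(\<Sum>a\<in>Out. p' a x k) = 1" if "x \<in> Ins" for x k
      using p that \<open>card Out > 0\<close> by (cases "k \<in> L") (simp_all add: p'_def)
    show "Lam a x X = msum dB (\<lambda>l. complex_of_real (p' a x l) \<cdot>\<^sub>m \<Phi>s l X) L"
      if "a \<in> Out" "x \<in> Ins" "X \<in> carrier_mat dC dC" for a x X
      using Lam that by (simp add: p'_def cong: msum_cong)
  qed
qed

theorem proposition1:
  fixes dB dC :: nat and \<Lambda> :: "complex mat \<Rightarrow> complex mat"
  assumes "dB > 0" and "dC > 0" and "channel dC dB \<Lambda>"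
  shows "(\<forall>(dA :: nat) Ext (Out :: 'o set) (Ins :: 'i set) M.
            dA > 0 \<and> incoherent_extension dA dB dC Ext \<Lambda> \<and> meas_assemblage dA Out Ins M \<longrightarrow>
            channel_assemblage dC dB \<Lambda> Out Ins (induced dA dB Ext M) \<and>
            unsteerable dC dB Out Ins (induced dA dB Ext M))
       \<and> (\<forall>(Out :: 'o set) (Ins :: 'i set) Lam.
            channel_assemblage dC dB \<Lambda> Out Ins Lam \<and> unsteerable dC dB Out Ins Lam \<longrightarrow>
            (\<exists>(dA :: nat) Ext M. dA > 0 \<and> incoherent_extension dA dB dC Ext \<Lambda> \<and>
               meas_assemblage dA Out Ins M \<and>
               (\<forall>a\<in>Out. \<forall>x\<in>Ins. \<forall>X \<in> carrier_mat dC dC. Lam a x X = induced dA dB Ext M a x X)))"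
proof (rule conjI; intro allI impI)
  fix dA :: nat and Ext and Out :: "'o set" and Ins :: "'i set" and M
  assume "dA > 0 \<and> incoherent_extension dA dB dC Ext \<Lambda> \<and> meas_assemblage dA Out Ins M"
  thus "channel_assemblage dC dB \<Lambda> Out Ins (induced dA dB Ext M) \<and> unsteerable dC dB Out Ins (induced dA dB Ext M)"
    using induced_assemblage_unsteerable[OF assms(1)] by blast
next
  fix Out :: "'o set" and Ins :: "'i set" and Lam
  assume asm: "channel_assemblage dC dB \<Lambda> Out Ins Lam \<and> unsteerable dC dB Out Ins Lam"
  obtain L :: "nat set" and \<Phi>s and p :: "'o \<Rightarrow> 'i \<Rightarrow> nat \<Rightarrow> real"
    where inst: "instrument dC dB L \<Phi>s" and \<Lambda>: "\<And>X. X \<in> carrier_mat dC dC \<Longrightarrow> \<Lambda> X = msum dB (\<lambda>l. \<Phi>s l X) L"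
      and p: "\<And>a x k. x \<in> Ins \<Longrightarrow> a \<in> Out \<Longrightarrow> p a x k \<ge> 0" "\<And>x k. x \<in> Ins \<Longrightarrow> (\<Sum>a\<in>Out. p a x k) = 1"
      and Lam: "\<And>a x X. a \<in> Out \<Longrightarrow> x \<in> Ins \<Longrightarrow> X \<in> carrier_mat dC dC \<Longrightarrow>
        Lam a x X = msum dB (\<lambda>l. complex_of_real (p a x l) \<cdot>\<^sub>m \<Phi>s l X) L"
    using unsteerable_normal_form[OF assms(2,3) conjunct1[OF asm] conjunct2[OF asm]] by blast
  define dA where "dA = Suc (\<Sum>L)"
  have L: "l < dA" if "l \<in> L" for l
    using member_le_sum[of l L "\<lambda>l. l", OF that _ instrumentD(1)[OF inst]] by (simp add: dA_def)
  show "\<exists>(dA :: nat) Ext M. dA > 0 \<and> incoherent_extension dA dB dC Ext \<Lambda> \<and> meas_assemblage dA Out Ins M \<and>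
      (\<forall>a\<in>Out. \<forall>x\<in>Ins. \<forall>X \<in> carrier_mat dC dC. Lam a x X = induced dA dB Ext M a x X)"
  proof (intro exI[of _ dA] exI[of _ "flag_extension dA dB L \<Phi>s"] exI[of _ "\<lambda>a x. diag_mat dA (p a x)"] conjI ballI)
    show "incoherent_extension dA dB dC (flag_extension dA dB L \<Phi>s) \<Lambda>"
      using assms(1) inst L \<Lambda> by (rule flag_extension_incoherent)
    show "meas_assemblage dA Out Ins (\<lambda>a x. diag_mat dA (p a x))"
      using asm p by (intro meas_assemblage_diag_mat) (auto simp: channel_assemblage_def)
    fix a x and X :: "complex mat" assume "a \<in> Out" "x \<in> Ins" "X \<in> carrier_mat dC dC"
    thus "Lam a x X = induced dA dB (flag_extension dA dB L \<Phi>s) (\<lambda>a x. diag_mat dA (p a x)) a x X"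
      using Lam L instrumentD(3)[OF inst] by (simp add: induced_flag_extension)
  qed (simp add: dA_def)
qed

end
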